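(* Let $S$ be semibounded in $\mathfrak H$ with lower bound $\gamma\in\mathbb R$ and $c\le\gamma$. Let $Q_c$ (into $\mathfrak K_c$) and $Q_c'$ (into $\mathfrak K_c'$) be representing maps for $\mathfrak t(S)-c$, and let $V:\mathfrak K_c\to\mathfrak K_c'$ be a partial isometry with initial space $\overline{\mathrm{ran}}\,Q_c$ and final space $\overline{\mathrm{ran}}\,Q_c'$ such that $Q_c'=VQ_c$. Let $J_c$ and $J_c'$ be the companion relations of $Q_c$ and $Q_c'$. Then $J_c'\,(V\restriction\mathrm{ran}\,Q_c)=J_c$; moreover $S\subset c+J_c'Q_c'=c+J_cQ_c$, where the inclusion is an equality if and only if $\mathrm{ran}\,(S-c)\cap\mathrm{mul}\,S^*=\mathrm{mul}\,S$; and $((J_c')^* )_{\rm reg}=V\,(J_c^* )_{\rm reg}$.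
   Context: Linear relations are linear subspaces $T\subset\mathfrak H\times\mathfrak K$; $\mathrm{dom},\mathrm{ran},\mathrm{mul}\,T=\{g:\{0,g\}\in T\}$; $T^*=\{\{h,k\}:(k,f)=(h,g)\ \forall\{f,g\}\in T\}$; $RT=\{\{f,h\}:\exists g,\{f,g\}\in T,\{g,h\}\in R\}$; $c+T=\{\{f,g+cf\}:\{f,g\}\in T\}$, $S-c=\{\{f,g-cf\}:\{f,g\}\in S\}$. For a closed relation $T$, $T_{\rm reg}=\{\{f,(I-\pi)g\}:\{f,g\}\in T\}$ with $\pi$ the orthogonal projection onto $\mathrm{mul}\,T$. $S$ is semibounded with lower bound $\gamma$ if $\gamma$ is the supremum of all $c$ with $(\varphi',\varphi)\ge c\|\varphi\|^2$ for all $\{\varphi,\varphi'\}\in S$; $\mathfrak t(S)[\varphi,\psi]=(\varphi',\psi)$ on $\mathrm{dom}\,S$. A representing map for $\mathfrak t(S)-c$ is a linear operator $Q_c$ into a Hilbert space with $\mathrm{dom}\,Q_c=\mathrm{dom}\,S$ and $\mathfrak t(S)[\varphi,\psi]=c(\varphi,\psi)+(Q_c\varphi,Q_c\psi)$; its companion relation is $J_c=\{\{Q_c\varphi,\varphi'-c\varphi\}:\{\varphi,\varphi'\}\in S\}$. *)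

theory Defs
  imports "HOL-Analysis.Analysis"
begin

text \<open>A complex Hilbert
space is encoded as its realification (a real Hilbert space, i.e. a complete real inner
product space) together with the multiplication by the imaginary unit, a real-linear
orthogonal map whose square is minus the identity. The real inner product is the real part
of the complex one.\<close>

class complex_hilbert = real_inner + complete_space +
  fixes imult :: "'a \<Rightarrow> 'a"
  assumes imult_add: "imult (x + y) = imult x + imult y"
    and imult_scaleR: "imult (r *\<^sub>R x) = r *\<^sub>R imult x"
    and imult_imult: "imult (imult x) = - x"
    and inner_imult_imult: "inner (imult x) (imult y) = inner x y"

definition cscale :: "complex \<Rightarrow> 'a::complex_hilbert \<Rightarrow> 'a"  (infixr "*\<^sub>C" 75) where
  "a *\<^sub>C x = Re a *\<^sub>R x + Im a *\<^sub>R imult x"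

text \<open>Complex inner product, linear in the first and conjugate linear in the second argument.\<close>
definition cinner :: "'a::complex_hilbert \<Rightarrow> 'a \<Rightarrow> complex" where
  "cinner x y = Complex (inner x y) (inner x (imult y))"

definition clinear :: "('a::complex_hilbert \<Rightarrow> 'b::complex_hilbert) \<Rightarrow> bool" where
  "clinear V \<longleftrightarrow> (\<forall>x y. V (x + y) = V x + V y) \<and> (\<forall>a x. V (a *\<^sub>C x) = a *\<^sub>C V x)"

text \<open>Linear operator with domain D (values outside D are irrelevant).\<close>
definition clinear_on :: "'a::complex_hilbert set \<Rightarrow> ('a \<Rightarrow> 'b::complex_hilbert) \<Rightarrow> bool" where
  "clinear_on D Q \<longleftrightarrow> (\<forall>x\<in>D. \<forall>y\<in>D. Q (x + y) = Q x + Q y) \<and> (\<forall>a. \<forall>x\<in>D. Q (a *\<^sub>C x) = a *\<^sub>C Q x)"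

definition orthogonal_compl :: "'a::complex_hilbert set \<Rightarrow> 'a set" where
  "orthogonal_compl M = {x. \<forall>m\<in>M. cinner x m = 0}"

definition orth_proj :: "'a::complex_hilbert set \<Rightarrow> 'a \<Rightarrow> 'a" where
  "orth_proj M g = (THE p. p \<in> M \<and> (\<forall>m\<in>M. cinner (g - p) m = 0))"

definition partial_isometry :: "('a::complex_hilbert \<Rightarrow> 'b::complex_hilbert) \<Rightarrow> 'a set \<Rightarrow> 'b set \<Rightarrow> bool" where
  "partial_isometry V M N \<longleftrightarrow> clinear V \<and> (\<forall>x\<in>M. norm (V x) = norm x)
     \<and> (\<forall>x\<in>orthogonal_compl M. V x = 0) \<and> V ` M = N"

definition lin_rel :: "('a::complex_hilbert \<times> 'b::complex_hilbert) set \<Rightarrow> bool" where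
  "lin_rel T \<longleftrightarrow> (0, 0) \<in> T \<and> (\<forall>p\<in>T. \<forall>q\<in>T. p + q \<in> T)
     \<and> (\<forall>a. \<forall>(f, g)\<in>T. (a *\<^sub>C f, a *\<^sub>C g) \<in> T)"

definition rdom :: "('a \<times> 'b) set \<Rightarrow> 'a set" where "rdom T = fst ` T"
definition rran :: "('a \<times> 'b) set \<Rightarrow> 'b set" where "rran T = snd ` T"
definition rmul :: "('a::zero \<times> 'b) set \<Rightarrow> 'b set" where "rmul T = {g. (0, g) \<in> T}"

definition radj :: "('a::complex_hilbert \<times> 'b::complex_hilbert) set \<Rightarrow> ('b \<times> 'a) set" where
  "radj T = {(h, k). \<forall>(f, g)\<in>T. cinner k f = cinner h g}"

definition rcomp :: "('b \<times> 'c) set \<Rightarrow> ('a \<times> 'b) set \<Rightarrow> ('a \<times> 'c) set" where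
  "rcomp R T = {(f, h). \<exists>g. (f, g) \<in> T \<and> (g, h) \<in> R}"

definition rplus_const :: "real \<Rightarrow> ('a::real_vector \<times> 'a) set \<Rightarrow> ('a \<times> 'a) set" where
  "rplus_const c T = {(f, g + c *\<^sub>R f) | f g. (f, g) \<in> T}"
definition rminus_const :: "('a::real_vector \<times> 'a) set \<Rightarrow> real \<Rightarrow> ('a \<times> 'a) set" where
  "rminus_const S c = {(f, g - c *\<^sub>R f) | f g. (f, g) \<in> S}"

definition graph_on :: "'a set \<Rightarrow> ('a \<Rightarrow> 'b) \<Rightarrow> ('a \<times> 'b) set" where
  "graph_on D Q = {(x, Q x) | x. x \<in> D}"

definition rreg :: "('a::complex_hilbert \<times> 'b::complex_hilbert) set \<Rightarrow> ('a \<times> 'b) set" where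
  "rreg T = {(f, g - orth_proj (rmul T) g) | f g. (f, g) \<in> T}"

definition lower_bounds_rel :: "('a::complex_hilbert \<times> 'a) set \<Rightarrow> real set" where
  "lower_bounds_rel S = {c. \<forall>(\<phi>, \<phi>')\<in>S. Im (cinner \<phi>' \<phi>) = 0 \<and> c * (norm \<phi>)\<^sup>2 \<le> Re (cinner \<phi>' \<phi>)}"

definition semibounded_lb :: "('a::complex_hilbert \<times> 'a) set \<Rightarrow> real \<Rightarrow> bool" where
  "semibounded_lb S \<gamma> \<longleftrightarrow> lin_rel S \<and> lower_bounds_rel S \<noteq> {} \<and> bdd_above (lower_bounds_rel S)
     \<and> \<gamma> = Sup (lower_bounds_rel S)"

text \<open>Q is a representing map for t(S) - c: a linear operator with domain dom S such that
  t(S)[phi,psi] = c (phi,psi) + (Q phi, Q psi), where t(S)[phi,psi] = (phi',psi).\<close>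
definition representing_map :: "('a::complex_hilbert \<times> 'a) set \<Rightarrow> real \<Rightarrow> ('a \<Rightarrow> 'k::complex_hilbert) \<Rightarrow> bool" where
  "representing_map S c Q \<longleftrightarrow> clinear_on (rdom S) Q \<and>
     (\<forall>(\<phi>, \<phi>')\<in>S. \<forall>\<psi>\<in>rdom S. cinner \<phi>' \<psi> = complex_of_real c * cinner \<phi> \<psi> + cinner (Q \<phi>) (Q \<psi>))"

definition companion :: "('a::complex_hilbert \<times> 'a) set \<Rightarrow> real \<Rightarrow> ('a \<Rightarrow> 'k) \<Rightarrow> ('k \<times> 'a) set" where
  "companion S c Q = {(Q \<phi>, \<phi>' - c *\<^sub>R \<phi>) | \<phi> \<phi>'. (\<phi>, \<phi>') \<in> S}"

end

theory Submission
  imports Defs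
begin

text \<open>Two representing maps for t(S) - c have the same Gram form on dom S, so
  norm (Q \<phi>) = norm (Q' \<phi>); in particular Q and Q' identify the same points of dom S. This
  gives J' V = J on ran Q and shows that J Q does not depend on the representing map. The
  elements {\<phi>, \<phi>'} of S with Q \<phi> = 0 are exactly those with \<phi>' - c \<phi> in mul S*, so a pair
  of c + J Q differs from a pair of S with the same first component by some {0, k} with
  k in ran (S - c) \<inter> mul S*; this gives the criterion for S = c + J Q. For the adjoints,
  mul J* is the orthogonal complement of ran Q, so by the projection theorem the regular part
  of J* consists of the pairs {h, m} of J* with m in the closure of ran Q, and the isometry V
  carries these onto the corresponding pairs of J'*. Semiboundedness is used only through S
  being a linear relation.\<close>

section \<open>The complex structure\<close>

lemma imult_minus: "imult (- x) = - imult (x::'a::complex_hilbert)"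
  using imult_scaleR[of "-1" x] by simp

lemma imult_diff: "imult (x - y) = imult x - imult (y::'a::complex_hilbert)"
  by (metis diff_conv_add_uminus imult_add imult_minus)

lemma bounded_linear_imult: "bounded_linear (imult :: 'a::complex_hilbert \<Rightarrow> 'a)"
  by (rule bounded_linear_intro[where K=1])
    (auto simp: imult_add imult_scaleR norm_eq_sqrt_inner inner_imult_imult)

lemma inner_imult_right: "inner x (imult y) = - inner (imult x) (y::'a::complex_hilbert)"
  using inner_imult_imult[of x "imult y"] by (simp add: imult_imult)

lemma inner_imult_self: "inner x (imult x) = (0::real)"
  using inner_imult_right[of x x] by (simp add: inner_commute)

lemma cscale_i: "\<i> *\<^sub>C x = imult x"
  by (simp add: cscale_def)

lemma cscale_of_real: "complex_of_real r *\<^sub>C x = r *\<^sub>R x"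
  by (simp add: cscale_def)

lemma cinner_eq_0_iff: "cinner x y = 0 \<longleftrightarrow> inner x y = 0 \<and> inner x (imult y) = 0"
  by (simp add: cinner_def complex_eq_iff)

lemma cinner_zero_left [simp]: "cinner 0 y = 0"
  by (simp add: cinner_eq_0_iff)

lemma cinner_diff_left: "cinner (x - y) z = cinner x z - cinner y z"
  by (simp add: cinner_def complex_eq_iff inner_diff_left)

lemma cinner_diff_right: "cinner x (y - z) = cinner x y - cinner x z"
  by (simp add: cinner_def complex_eq_iff inner_diff_right imult_diff)

lemma cinner_scaleR_left: "cinner (r *\<^sub>R x) y = complex_of_real r * cinner x y"
  by (simp add: cinner_def complex_eq_iff)

lemma cinner_self: "cinner x x = complex_of_real ((norm x)\<^sup>2)"
  by (simp add: cinner_def complex_eq_iff inner_imult_self power2_norm_eq_inner)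

lemma cinner_self_eq_0 [simp]: "cinner x x = 0 \<longleftrightarrow> x = 0"
  by (simp add: cinner_self)

lemma cinner_commute: "cinner y x = cnj (cinner x y)"
  by (simp add: cinner_def complex_eq_iff inner_commute)
    (metis inner_commute inner_imult_right)

lemma clinear_imult: "clinear V \<Longrightarrow> V (imult x) = imult (V x)"
  by (metis clinear_def cscale_i)

section \<open>Nearest points and orthogonal projections\<close>

lemma apollonius:
  fixes k x y :: "'a::real_inner"
  shows "(dist x y)\<^sup>2 = 2 * (dist k x)\<^sup>2 + 2 * (dist k y)\<^sup>2 - 4 * (dist k ((1/2) *\<^sub>R x + (1/2) *\<^sub>R y))\<^sup>2"
  by (simp add: dist_norm power2_norm_eq_inner inner_commute algebra_simps)

lemma convex_minimizing_sequence_Cauchy: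
  fixes k :: "'a::real_inner"
  assumes "convex S" "\<And>n. y n \<in> S" "\<And>z. z \<in> S \<Longrightarrow> \<delta> \<le> (dist k z)\<^sup>2"
    and "\<And>n. (dist k (y n))\<^sup>2 < \<delta> + inverse (real (Suc n))"
  shows "Cauchy y"
proof (rule CauchyI)
  have dist_y: "(dist (y m) (y n))\<^sup>2 < 2 * inverse (real (Suc m)) + 2 * inverse (real (Suc n))"
    for m n
  proof -
    have "(1/2) *\<^sub>R y m + (1/2) *\<^sub>R y n \<in> S"
      using assms(1,2) by (intro convexD) auto
    then have "(dist (y m) (y n))\<^sup>2 \<le> 2 * (dist k (y m))\<^sup>2 + 2 * (dist k (y n))\<^sup>2 - 4 * \<delta>"
      using apollonius[of "y m" "y n" k] assms(3) by fastforce
    then show ?thesis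
      using assms(4)[of m] assms(4)[of n] by linarith
  qed
  fix e :: real assume e: "e > 0"
  then obtain N :: nat where N: "N > 0" "inverse (real N) < e\<^sup>2 / 4"
    using ex_inverse_of_nat_less[of "e\<^sup>2 / 4"] by auto
  have "dist (y m) (y n) < e" if "N \<le> m" "N \<le> n" for m n
  proof -
    have "inverse (real (Suc m)) \<le> inverse (real N)" "inverse (real (Suc n)) \<le> inverse (real N)"
      using that N by (auto intro: le_imp_inverse_le)
    then have "(dist (y m) (y n))\<^sup>2 < e\<^sup>2"
      using dist_y[of m n] N(2) by linarith
    then show ?thesis
      using e by (simp add: power_less_imp_less_base)
  qed
  then show "\<exists>N. \<forall>m\<ge>N. \<forall>n\<ge>N. norm (y m - y n) < e"
    by (auto simp: dist_norm)
qed

text \<open>The library's closest point of a closed convex set needs a Heine--Borel space; in a Hilbert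
  space completeness takes the place of compactness.\<close>

lemma closed_convex_nearest_point:
  fixes k :: "'a::{real_inner,complete_space}"
  assumes "closed S" "convex S" "S \<noteq> {}"
  shows "\<exists>m\<in>S. \<forall>y\<in>S. dist k m \<le> dist k y"
proof -
  define \<delta> where "\<delta> = Inf ((\<lambda>z. (dist k z)\<^sup>2) ` S)"
  have \<delta>_le: "\<delta> \<le> (dist k z)\<^sup>2" if "z \<in> S" for z
    unfolding \<delta>_def using that by (intro cInf_lower bdd_belowI[of _ 0]) auto
  have "\<forall>n. \<exists>y. y \<in> S \<and> (dist k y)\<^sup>2 < \<delta> + inverse (real (Suc n))"
    using cInf_lessD[of "(\<lambda>z. (dist k z)\<^sup>2) ` S" "\<delta> + inverse (real (Suc _))"] assms(3)
    unfolding \<delta>_def by fastforce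
  then obtain y where y: "\<And>n. y n \<in> S" "\<And>n. (dist k (y n))\<^sup>2 < \<delta> + inverse (real (Suc n))"
    by metis
  then have "Cauchy y"
    using convex_minimizing_sequence_Cauchy[OF assms(2)] \<delta>_le by blast
  then obtain m where lim: "y \<longlonglongrightarrow> m"
    using Cauchy_convergent_iff convergent_def by blast
  have "(dist k m)\<^sup>2 \<le> \<delta> + 0"
  proof (rule LIMSEQ_le)
    show "(\<lambda>n. (dist k (y n))\<^sup>2) \<longlonglongrightarrow> (dist k m)\<^sup>2"
      by (intro tendsto_intros lim)
    show "(\<lambda>n. \<delta> + inverse (real (Suc n))) \<longlonglongrightarrow> \<delta> + 0"
      by (intro tendsto_intros LIMSEQ_inverse_real_of_nat)
  qed (use y(2) in \<open>auto intro: less_imp_le\<close>)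
  have "dist k m \<le> dist k z" if "z \<in> S" for z
  proof (rule power2_le_imp_le)
    show "(dist k m)\<^sup>2 \<le> (dist k z)\<^sup>2"
      using \<open>(dist k m)\<^sup>2 \<le> \<delta> + 0\<close> \<delta>_le[OF that] by linarith
  qed simp
  moreover have "m \<in> S"
    using assms(1) lim y(1) closed_sequentially by blast
  ultimately show ?thesis
    by blast
qed

lemma nearest_point_subspace_orthogonal:
  fixes k :: "'a::real_inner"
  assumes "subspace M" "closed M" "m \<in> M" "\<forall>z\<in>M. dist k m \<le> dist k z" "y \<in> M"
  shows "inner (k - m) y = 0"
proof -
  have "m + s *\<^sub>R y \<in> M" for s
    by (rule subspace_add[OF assms(1,3) subspace_scale[OF assms(1,5)]])
  then have "inner (k - m) ((m + s *\<^sub>R y) - m) \<le> 0" for s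
    by (rule any_closest_point_dot[OF subspace_imp_convex[OF assms(1)] assms(2,3) _ assms(4)])
  then have "s * inner (k - m) y \<le> 0" for s
    by simp
  from this[of 1] this[of "-1"] show ?thesis
    by linarith
qed

lemma closed_subspace_orthogonal_decomposition:
  fixes k :: "'a::{real_inner,complete_space}"
  assumes "subspace M" "closed M"
  shows "\<exists>m\<in>M. \<forall>y\<in>M. inner (k - m) y = 0"
proof -
  obtain m where "m \<in> M" "\<forall>y\<in>M. dist k m \<le> dist k y"
    using closed_convex_nearest_point[OF assms(2) subspace_imp_convex[OF assms(1)], of k]
      subspace_0[OF assms(1)] by blast
  then show ?thesis
    using nearest_point_subspace_orthogonal[OF assms] by blast
qed

lemma subspace_closure:
  fixes M :: "'a::real_normed_vector set"
  assumes "subspace M"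
  shows "subspace (closure M)"
  unfolding subspace_def
proof (intro conjI ballI allI)
  show "0 \<in> closure M"
    using assms closure_subset subspace_0 by blast
next
  fix x y assume "x \<in> closure M" "y \<in> closure M"
  then obtain f g where "\<forall>n. f n \<in> M" "f \<longlonglongrightarrow> x" "\<forall>n. g n \<in> M" "g \<longlonglongrightarrow> y"
    unfolding closure_sequential by blast
  then show "x + y \<in> closure M"
    unfolding closure_sequential using subspace_add[OF assms]
    by (intro exI[of _ "\<lambda>n. f n + g n"]) (simp add: tendsto_add)
next
  fix r x assume "x \<in> closure M"
  then obtain f where "\<forall>n. f n \<in> M" "f \<longlonglongrightarrow> x"
    unfolding closure_sequential by blast
  then show "r *\<^sub>R x \<in> closure M"
    unfolding closure_sequential using subspace_scale[OF assms]
    by (intro exI[of _ "\<lambda>n. r *\<^sub>R f n"]) (simp add: tendsto_scaleR)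
qed

definition csubspace :: "'a::complex_hilbert set \<Rightarrow> bool" where
  "csubspace A \<longleftrightarrow> 0 \<in> A \<and> (\<forall>x\<in>A. \<forall>y\<in>A. x + y \<in> A) \<and> (\<forall>a. \<forall>x\<in>A. a *\<^sub>C x \<in> A)"

lemma csubspace_imult: "csubspace A \<Longrightarrow> x \<in> A \<Longrightarrow> imult x \<in> A"
  by (metis csubspace_def cscale_i)

lemma csubspace_imp_subspace: "csubspace A \<Longrightarrow> subspace A"
  by (metis csubspace_def cscale_of_real subspace_def)

lemma csubspace_iff_subspace_imult:
  "csubspace A \<longleftrightarrow> subspace A \<and> (\<forall>x\<in>A. imult x \<in> A)"
proof
  assume "subspace A \<and> (\<forall>x\<in>A. imult x \<in> A)"
  then show "csubspace A"
    unfolding csubspace_def cscale_def by (auto intro: subspace_0 subspace_add subspace_scale)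
qed (simp add: csubspace_imp_subspace csubspace_imult)

lemma csubspace_closure:
  assumes "csubspace A"
  shows "csubspace (closure A)"
proof -
  have "imult ` closure A \<subseteq> closure A"
  proof (rule image_closure_subset)
    show "continuous_on (closure A) imult"
      by (intro linear_continuous_on bounded_linear_imult)
    show "imult ` A \<subseteq> closure A"
      using assms csubspace_imult closure_subset by blast
  qed simp
  then show ?thesis
    using assms subspace_closure by (auto simp: csubspace_iff_subspace_imult)
qed

lemma cinner_orthogonal_compl_closure:
  assumes "n \<in> orthogonal_compl A" "m \<in> closure A"
  shows "cinner n m = 0"
proof -
  have "A \<subseteq> {x. inner n x = 0} \<inter> {x. inner (imult n) x = 0}"
    using assms(1) by (auto simp: orthogonal_compl_def cinner_eq_0_iff inner_imult_right)
  then have "closure A \<subseteq> {x. inner n x = 0} \<inter> {x. inner (imult n) x = 0}"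
    by (intro closure_minimal closed_Int closed_hyperplane)
  then show ?thesis
    using assms(2) by (auto simp: cinner_eq_0_iff inner_imult_right)
qed

lemma csubspace_orthogonal_decomposition:
  assumes "csubspace A"
  shows "\<exists>m\<in>closure A. k - m \<in> orthogonal_compl A"
proof -
  obtain m where m: "m \<in> closure A" "\<forall>y\<in>closure A. inner (k - m) y = 0"
    using closed_subspace_orthogonal_decomposition[of "closure A" k] assms
      subspace_closure csubspace_imp_subspace by blast
  have "cinner (k - m) a = 0" if "a \<in> A" for a
    using that m(2) closure_subset csubspace_imult[OF assms]
    by (auto simp: cinner_eq_0_iff)
  then show ?thesis
    using m(1) by (auto simp: orthogonal_compl_def)
qed

lemma cinner_closure_orthogonal_compl:
  assumes "m \<in> closure A" "n \<in> orthogonal_compl A"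
  shows "cinner m n = 0"
  using cinner_orthogonal_compl_closure[OF assms(2,1)] by (subst cinner_commute) simp

lemma orth_proj_orthogonal_compl:
  assumes "m \<in> closure A" "k - m \<in> orthogonal_compl A"
  shows "orth_proj (orthogonal_compl A) k = k - m"
  unfolding orth_proj_def
proof (rule the_equality)
  show "k - m \<in> orthogonal_compl A \<and> (\<forall>n\<in>orthogonal_compl A. cinner (k - (k - m)) n = 0)"
    using assms cinner_closure_orthogonal_compl[OF assms(1)] by simp
next
  fix p assume p: "p \<in> orthogonal_compl A \<and> (\<forall>n\<in>orthogonal_compl A. cinner (k - p) n = 0)"
  define d where "d = p - (k - m)"
  have "d \<in> orthogonal_compl A"
    using p assms(2) by (simp add: d_def orthogonal_compl_def cinner_diff_left)
  then have "cinner d d = cinner m d - cinner (k - p) d"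
    by (simp add: d_def cinner_diff_left[symmetric] algebra_simps)
  also have "\<dots> = 0"
    using p \<open>d \<in> orthogonal_compl A\<close> cinner_closure_orthogonal_compl[OF assms(1)] by simp
  finally show "p = k - m"
    by (simp add: d_def)
qed

section \<open>Linear relations and representing maps\<close>

lemma lin_rel_add: "lin_rel S \<Longrightarrow> (a, b) \<in> S \<Longrightarrow> (c, d) \<in> S \<Longrightarrow> (a + c, b + d) \<in> S"
  unfolding lin_rel_def by (metis add_Pair)

lemma lin_rel_cscale: "lin_rel S \<Longrightarrow> (a, b) \<in> S \<Longrightarrow> (z *\<^sub>C a, z *\<^sub>C b) \<in> S"
  unfolding lin_rel_def by blast

lemma lin_rel_diff:
  assumes "lin_rel S" "(a, b) \<in> S" "(c, d) \<in> S"
  shows "(a - c, b - d) \<in> S"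
proof -
  have "((-1) *\<^sub>R c, (-1) *\<^sub>R d) \<in> S"
    using lin_rel_cscale[OF assms(1,3), of "complex_of_real (-1)"] unfolding cscale_of_real .
  then show ?thesis
    using lin_rel_add[OF assms(1,2), of "- c" "- d"] by simp
qed

lemma rdom_iff: "x \<in> rdom S \<longleftrightarrow> (\<exists>x'. (x, x') \<in> S)"
  by (force simp: rdom_def)

lemma rdomI: "(x, y) \<in> S \<Longrightarrow> x \<in> rdom S"
  by (force simp: rdom_def)


lemma csubspace_rdom:
  assumes "lin_rel S"
  shows "csubspace (rdom S)"
  unfolding csubspace_def
proof (intro conjI ballI allI)
  show "0 \<in> rdom S"
    using assms by (auto simp: lin_rel_def rdom_iff)
next
  fix x y assume "x \<in> rdom S" "y \<in> rdom S"
  then show "x + y \<in> rdom S"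
    using lin_rel_add[OF assms] by (meson rdom_iff)
next
  fix a x assume "x \<in> rdom S"
  then show "a *\<^sub>C x \<in> rdom S"
    using lin_rel_cscale[OF assms] by (meson rdom_iff)
qed

lemma clinear_on_diff:
  assumes "csubspace D" "clinear_on D Q" "x \<in> D" "y \<in> D"
  shows "Q (x - y) = Q x - Q y"
proof -
  have "x - y \<in> D"
    using assms(1,3,4) csubspace_imp_subspace subspace_diff by blast
  then have "Q (x - y) + Q y = Q x"
    using assms(2,4) unfolding clinear_on_def by (metis diff_add_cancel)
  then show ?thesis
    by (simp add: eq_diff_eq)
qed

lemma csubspace_image:
  assumes "csubspace D" "clinear_on D Q"
  shows "csubspace (Q ` D)"
  unfolding csubspace_def
proof (intro conjI ballI allI)
  have "Q 0 = 0"
    using clinear_on_diff[OF assms, of 0 0] assms(1) by (simp add: csubspace_def)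
  then show "0 \<in> Q ` D"
    using assms(1) unfolding csubspace_def by force
next
  fix u v assume "u \<in> Q ` D" "v \<in> Q ` D"
  then obtain x y where "x \<in> D" "y \<in> D" "u = Q x" "v = Q y"
    by blast
  then show "u + v \<in> Q ` D"
    using assms unfolding csubspace_def clinear_on_def by (metis image_eqI)
next
  fix a u assume "u \<in> Q ` D"
  then obtain x where "x \<in> D" "u = Q x"
    by blast
  then show "a *\<^sub>C u \<in> Q ` D"
    using assms unfolding csubspace_def clinear_on_def by (metis image_eqI)
qed

lemma cinner_isometry_on:
  assumes "clinear V" "csubspace M" "\<forall>x\<in>M. norm (V x) = norm x" "x \<in> M" "y \<in> M"
  shows "cinner (V x) (V y) = cinner x y"
proof -
  have inner_eq: "inner (V u) (V w) = inner u w" if "u \<in> M" "w \<in> M" for u w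
  proof -
    have "u + w \<in> M"
      using assms(2) that by (simp add: csubspace_def)
    have "V u + V w = V (u + w)"
      using assms(1) by (simp add: clinear_def)
    have "inner (V u) (V w) = ((norm (V u + V w))\<^sup>2 - (norm (V u))\<^sup>2 - (norm (V w))\<^sup>2) / 2"
      by (rule dot_norm)
    also have "\<dots> = ((norm (u + w))\<^sup>2 - (norm u)\<^sup>2 - (norm w)\<^sup>2) / 2"
      using assms(3) that \<open>u + w \<in> M\<close> \<open>V u + V w = V (u + w)\<close> by simp
    also have "\<dots> = inner u w"
      by (rule dot_norm[symmetric])
    finally show ?thesis .
  qed
  show ?thesis
    using inner_eq[OF assms(4,5)] inner_eq[OF assms(4) csubspace_imult[OF assms(2,5)]]
    by (simp add: cinner_def clinear_imult[OF assms(1)])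
qed

lemma representing_map_clinear_on: "representing_map S c Q \<Longrightarrow> clinear_on (rdom S) Q"
  by (simp add: representing_map_def)

lemma representing_map_cinner:
  assumes "representing_map S c Q" "(\<phi>, \<phi>') \<in> S" "\<psi> \<in> rdom S"
  shows "cinner (\<phi>' - c *\<^sub>R \<phi>) \<psi> = cinner (Q \<phi>) (Q \<psi>)"
proof -
  have "cinner \<phi>' \<psi> = complex_of_real c * cinner \<phi> \<psi> + cinner (Q \<phi>) (Q \<psi>)"
    using assms unfolding representing_map_def by blast
  then show ?thesis
    by (simp add: cinner_diff_left cinner_scaleR_left)
qed

lemma representing_map_norm_eq:
  assumes "representing_map S c Q" "representing_map S c Q'" "x \<in> rdom S"
  shows "norm (Q x) = norm (Q' x)"
proof -
  obtain x' where x': "(x, x') \<in> S"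
    using assms(3) unfolding rdom_iff by blast
  have "cinner (Q x) (Q x) = cinner (Q' x) (Q' x)"
    using representing_map_cinner[OF assms(1) x' assms(3)] representing_map_cinner[OF assms(2) x' assms(3)]
    by (rule trans[OF sym])
  then have "(norm (Q x))\<^sup>2 = (norm (Q' x))\<^sup>2"
    unfolding cinner_self of_real_eq_iff .
  then show ?thesis
    by (rule power2_eq_imp_eq) simp_all
qed

lemma representing_map_eq_iff:
  assumes "lin_rel S" "representing_map S c Q" "representing_map S c Q'" "x \<in> rdom S" "y \<in> rdom S"
  shows "Q x = Q y \<longleftrightarrow> Q' x = Q' y"
proof -
  have D: "csubspace (rdom S)"
    by (rule csubspace_rdom[OF assms(1)])
  then have "x - y \<in> rdom S"
    using assms(4,5) by (simp add: csubspace_imp_subspace subspace_diff)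
  then have "norm (Q (x - y)) = norm (Q' (x - y))"
    by (rule representing_map_norm_eq[OF assms(2,3)])
  moreover have "Q (x - y) = Q x - Q y"
    by (rule clinear_on_diff[OF D representing_map_clinear_on[OF assms(2)] assms(4,5)])
  moreover have "Q' (x - y) = Q' x - Q' y"
    by (rule clinear_on_diff[OF D representing_map_clinear_on[OF assms(3)] assms(4,5)])
  ultimately have norm_eq: "norm (Q x - Q y) = norm (Q' x - Q' y)"
    by simp
  have "Q x = Q y \<longleftrightarrow> norm (Q x - Q y) = 0"
    by simp
  also have "\<dots> \<longleftrightarrow> norm (Q' x - Q' y) = 0"
    by (simp only: norm_eq)
  also have "\<dots> \<longleftrightarrow> Q' x = Q' y"
    by simp
  finally show ?thesis .
qed

section \<open>Companion relations\<close>

lemma mem_rcomp_graph_on: "(x, z) \<in> rcomp R (graph_on D Q) \<longleftrightarrow> x \<in> D \<and> (Q x, z) \<in> R"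
  by (auto simp: rcomp_def graph_on_def)

lemma mem_companion:
  "(u, v) \<in> companion S c Q \<longleftrightarrow> (\<exists>\<phi> \<phi>'. (\<phi>, \<phi>') \<in> S \<and> Q \<phi> = u \<and> \<phi>' - c *\<^sub>R \<phi> = v)"
  by (auto simp: companion_def)

lemma mem_companion_comp:
  "(\<psi>, h) \<in> rcomp (companion S c Q) (graph_on (rdom S) Q) \<longleftrightarrow>
    \<psi> \<in> rdom S \<and> (\<exists>\<phi> \<phi>'. (\<phi>, \<phi>') \<in> S \<and> Q \<phi> = Q \<psi> \<and> \<phi>' - c *\<^sub>R \<phi> = h)"
  by (simp add: mem_rcomp_graph_on mem_companion)

lemma mem_rplus_companion_comp:
  "(\<psi>, h) \<in> rplus_const c (rcomp (companion S c Q) (graph_on (rdom S) Q)) \<longleftrightarrow>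
    \<psi> \<in> rdom S \<and> (\<exists>\<phi> \<phi>'. (\<phi>, \<phi>') \<in> S \<and> Q \<phi> = Q \<psi> \<and> \<phi>' - c *\<^sub>R \<phi> = h - c *\<^sub>R \<psi>)"
proof -
  have "(\<psi>, h) \<in> rplus_const c T \<longleftrightarrow> (\<psi>, h - c *\<^sub>R \<psi>) \<in> T" for T
    by (force simp: rplus_const_def)
  then show ?thesis
    by (simp add: mem_companion_comp)
qed

lemma radj_companion_iff:
  "(h, k) \<in> radj (companion S c Q) \<longleftrightarrow> (\<forall>(\<phi>, \<phi>')\<in>S. cinner k (Q \<phi>) = cinner h (\<phi>' - c *\<^sub>R \<phi>))"
  unfolding radj_def companion_def by auto

lemma rmul_radj_companion: "rmul (radj (companion S c Q)) = orthogonal_compl (Q ` rdom S)"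
  unfolding rmul_def orthogonal_compl_def radj_companion_iff by (auto simp: rdom_iff)

lemma radj_diff:
  assumes "(h, k) \<in> radj T" "(h', k') \<in> radj T"
  shows "(h - h', k - k') \<in> radj T"
proof -
  have "cinner (k - k') f = cinner (h - h') g" if "(f, g) \<in> T" for f g
  proof -
    have "cinner k f = cinner h g" "cinner k' f = cinner h' g"
      using assms that unfolding radj_def by fast+
    then show ?thesis
      by (simp add: cinner_diff_left cinner_diff_right)
  qed
  then show ?thesis
    unfolding radj_def by blast
qed

lemma mem_rreg_radj:
  assumes "csubspace A" "rmul (radj T) = orthogonal_compl A"
  shows "(h, w) \<in> rreg (radj T) \<longleftrightarrow> (h, w) \<in> radj T \<and> w \<in> closure A"
proof
  assume "(h, w) \<in> rreg (radj T)"
  then obtain k where k: "(h, k) \<in> radj T" "w = k - orth_proj (orthogonal_compl A) k"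
    unfolding rreg_def assms(2) by blast
  obtain m where m: "m \<in> closure A" "k - m \<in> orthogonal_compl A"
    using csubspace_orthogonal_decomposition[OF assms(1)] by blast
  have "(0, k - m) \<in> radj T"
    using m(2) assms(2) unfolding rmul_def by blast
  then have "(h - 0, k - (k - m)) \<in> radj T"
    by (rule radj_diff[OF k(1)])
  moreover have "w = m"
    using k(2) orth_proj_orthogonal_compl[OF m] by simp
  ultimately show "(h, w) \<in> radj T \<and> w \<in> closure A"
    using m(1) by simp
next
  assume hw: "(h, w) \<in> radj T \<and> w \<in> closure A"
  then have "orth_proj (orthogonal_compl A) w = 0"
    using orth_proj_orthogonal_compl[of w A w] by (simp add: orthogonal_compl_def)
  then show "(h, w) \<in> rreg (radj T)"
    using hw unfolding rreg_def assms(2) by force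
qed

lemma csubspace_range_representing_map:
  "lin_rel S \<Longrightarrow> representing_map S c Q \<Longrightarrow> csubspace (Q ` rdom S)"
  by (intro csubspace_image csubspace_rdom representing_map_clinear_on)

lemma companion_representing_map_iff:
  assumes "lin_rel S" "representing_map S c Q" "representing_map S c Q'" "\<psi> \<in> rdom S"
  shows "(Q' \<psi>, v) \<in> companion S c Q' \<longleftrightarrow> (Q \<psi>, v) \<in> companion S c Q"
proof -
  have "Q \<phi> = Q \<psi> \<longleftrightarrow> Q' \<phi> = Q' \<psi>" if "(\<phi>, \<phi>') \<in> S" for \<phi> \<phi>'
    by (rule representing_map_eq_iff[OF assms(1-3) rdomI[OF that] assms(4)])
  then show ?thesis
    unfolding mem_companion by blast
qed

lemma companion_comp_partial_isometry_eq:
  assumes "lin_rel S" "representing_map S c Q" "representing_map S c Q'"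
    and "\<forall>\<phi>\<in>rdom S. Q' \<phi> = V (Q \<phi>)"
  shows "rcomp (companion S c Q') (graph_on (Q ` rdom S) V) = companion S c Q"
proof -
  have "(u, v) \<in> rcomp (companion S c Q') (graph_on (Q ` rdom S) V) \<longleftrightarrow>
      (u, v) \<in> companion S c Q" for u v
  proof -
    have "(u, v) \<in> rcomp (companion S c Q') (graph_on (Q ` rdom S) V) \<longleftrightarrow>
        (\<exists>\<psi>\<in>rdom S. u = Q \<psi> \<and> (Q' \<psi>, v) \<in> companion S c Q')"
      using assms(4) by (auto simp: mem_rcomp_graph_on)
    also have "\<dots> \<longleftrightarrow> (\<exists>\<psi>\<in>rdom S. u = Q \<psi> \<and> (Q \<psi>, v) \<in> companion S c Q)"
      by (rule bex_cong[OF refl]) (simp add: companion_representing_map_iff[OF assms(1-3)])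
    also have "\<dots> \<longleftrightarrow> (u, v) \<in> companion S c Q"
      by (auto simp: mem_companion intro: rdomI)
    finally show ?thesis .
  qed
  then show ?thesis
    by (simp add: set_eq_iff)
qed

lemma subset_rplus_companion_comp:
  "S \<subseteq> rplus_const c (rcomp (companion S c Q) (graph_on (rdom S) Q))"
proof clarify
  fix f g assume "(f, g) \<in> S"
  then show "(f, g) \<in> rplus_const c (rcomp (companion S c Q) (graph_on (rdom S) Q))"
    unfolding mem_rplus_companion_comp rdom_iff by blast
qed

lemma companion_comp_eq:
  assumes "lin_rel S" "representing_map S c Q" "representing_map S c Q'"
  shows "rcomp (companion S c Q') (graph_on (rdom S) Q') = rcomp (companion S c Q) (graph_on (rdom S) Q)"
  using companion_representing_map_iff[OF assms] by (auto simp: set_eq_iff mem_rcomp_graph_on)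

lemma mem_rmul_radj: "k \<in> rmul (radj T) \<longleftrightarrow> (\<forall>(f, g)\<in>T. cinner k f = 0)"
  by (simp add: rmul_def radj_def)

lemma rmul_radj_iff_representing_map_zero:
  assumes "representing_map S c Q" "(\<xi>, \<xi>') \<in> S"
  shows "\<xi>' - c *\<^sub>R \<xi> \<in> rmul (radj S) \<longleftrightarrow> Q \<xi> = 0"
proof
  assume "\<xi>' - c *\<^sub>R \<xi> \<in> rmul (radj S)"
  then have "cinner (\<xi>' - c *\<^sub>R \<xi>) \<xi> = 0"
    using assms(2) unfolding mem_rmul_radj by blast
  then show "Q \<xi> = 0"
    using representing_map_cinner[OF assms rdomI[OF assms(2)]] by simp
next
  assume "Q \<xi> = 0"
  have "cinner (\<xi>' - c *\<^sub>R \<xi>) f = 0" if "(f, g) \<in> S" for f g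
    using representing_map_cinner[OF assms rdomI[OF that]] \<open>Q \<xi> = 0\<close> by simp
  then show "\<xi>' - c *\<^sub>R \<xi> \<in> rmul (radj S)"
    unfolding mem_rmul_radj by blast
qed

lemma representing_map_zero:
  assumes "lin_rel S" "representing_map S c Q"
  shows "Q 0 = 0"
proof -
  have "0 \<in> rdom S"
    using csubspace_rdom[OF assms(1)] by (simp add: csubspace_def)
  from clinear_on_diff[OF csubspace_rdom[OF assms(1)] representing_map_clinear_on[OF assms(2)] this this]
  show ?thesis
    by simp
qed

lemma mem_rran_rminus: "x \<in> rran (rminus_const S c) \<longleftrightarrow> (\<exists>f g. (f, g) \<in> S \<and> g - c *\<^sub>R f = x)"
  by (force simp: rran_def rminus_const_def)

lemma rmul_subset_rran_inter_rmul_radj: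
  assumes "lin_rel S" "representing_map S c Q"
  shows "rmul S \<subseteq> rran (rminus_const S c) \<inter> rmul (radj S)"
proof
  fix k assume "k \<in> rmul S"
  then have "(0, k) \<in> S"
    by (simp add: rmul_def)
  moreover from this have "k - c *\<^sub>R 0 \<in> rmul (radj S)"
    using rmul_radj_iff_representing_map_zero[OF assms(2)] representing_map_zero[OF assms] by blast
  moreover from \<open>(0, k) \<in> S\<close> have "k \<in> rran (rminus_const S c)"
    unfolding mem_rran_rminus by force
  ultimately show "k \<in> rran (rminus_const S c) \<inter> rmul (radj S)"
    by simp
qed

lemma rran_inter_rmul_radj_subset_rmul_rplus:
  assumes "lin_rel S" "representing_map S c Q"
  shows "rran (rminus_const S c) \<inter> rmul (radj S)
    \<subseteq> rmul (rplus_const c (rcomp (companion S c Q) (graph_on (rdom S) Q)))"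
proof
  fix x assume x: "x \<in> rran (rminus_const S c) \<inter> rmul (radj S)"
  then obtain f g where fg: "(f, g) \<in> S" "g - c *\<^sub>R f = x"
    unfolding Int_iff mem_rran_rminus by blast
  then have "Q f = Q 0"
    using x rmul_radj_iff_representing_map_zero[OF assms(2)] representing_map_zero[OF assms] by auto
  moreover have "0 \<in> rdom S"
    using csubspace_rdom[OF assms(1)] by (simp add: csubspace_def)
  ultimately show "x \<in> rmul (rplus_const c (rcomp (companion S c Q) (graph_on (rdom S) Q)))"
    unfolding rmul_def mem_rplus_companion_comp using fg by auto
qed

lemma rplus_companion_comp_subset:
  assumes "lin_rel S" "representing_map S c Q"
    and "rran (rminus_const S c) \<inter> rmul (radj S) \<subseteq> rmul S"
  shows "rplus_const c (rcomp (companion S c Q) (graph_on (rdom S) Q)) \<subseteq> S"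
proof clarify
  fix \<psi> h assume "(\<psi>, h) \<in> rplus_const c (rcomp (companion S c Q) (graph_on (rdom S) Q))"
  then obtain \<phi> \<phi>' where \<psi>: "\<psi> \<in> rdom S" and \<phi>: "(\<phi>, \<phi>') \<in> S" "Q \<phi> = Q \<psi>"
      "\<phi>' - c *\<^sub>R \<phi> = h - c *\<^sub>R \<psi>"
    unfolding mem_rplus_companion_comp by blast
  obtain \<psi>' where \<psi>': "(\<psi>, \<psi>') \<in> S"
    using \<psi> unfolding rdom_iff by blast
  define k where "k = (\<phi>' - \<psi>') - c *\<^sub>R (\<phi> - \<psi>)"
  have \<xi>: "(\<phi> - \<psi>, \<phi>' - \<psi>') \<in> S"
    by (rule lin_rel_diff[OF assms(1) \<phi>(1) \<psi>'])
  have "Q (\<phi> - \<psi>) = 0"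
    using clinear_on_diff[OF csubspace_rdom[OF assms(1)] representing_map_clinear_on[OF assms(2)]
        rdomI[OF \<phi>(1)] \<psi>] \<phi>(2) by simp
  then have "k \<in> rmul (radj S)"
    unfolding k_def using rmul_radj_iff_representing_map_zero[OF assms(2) \<xi>] by simp
  moreover have "k \<in> rran (rminus_const S c)"
    unfolding k_def mem_rran_rminus using \<xi> by blast
  ultimately have "(0, k) \<in> S"
    using assms(3) by (auto simp: rmul_def)
  from lin_rel_add[OF assms(1) \<psi>' this] have "(\<psi>, \<psi>' + k) \<in> S"
    by simp
  moreover have "\<psi>' + k = h"
    using \<phi>(3) by (simp add: k_def algebra_simps scaleR_diff_right)
  ultimately show "(\<psi>, h) \<in> S"
    by simp
qed

lemma eq_rplus_companion_comp_iff:
  assumes "lin_rel S" "representing_map S c Q"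
  shows "S = rplus_const c (rcomp (companion S c Q) (graph_on (rdom S) Q))
    \<longleftrightarrow> rran (rminus_const S c) \<inter> rmul (radj S) = rmul S"
proof
  assume "S = rplus_const c (rcomp (companion S c Q) (graph_on (rdom S) Q))"
  then show "rran (rminus_const S c) \<inter> rmul (radj S) = rmul S"
    using rmul_subset_rran_inter_rmul_radj[OF assms] rran_inter_rmul_radj_subset_rmul_rplus[OF assms]
    by (simp add: subset_antisym)
next
  assume "rran (rminus_const S c) \<inter> rmul (radj S) = rmul S"
  then show "S = rplus_const c (rcomp (companion S c Q) (graph_on (rdom S) Q))"
    using rplus_companion_comp_subset[OF assms] subset_rplus_companion_comp[of S c Q]
    by (simp add: subset_antisym)
qed

lemma radj_companion_partial_isometry_iff:
  assumes "lin_rel S" "representing_map S c Q"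
    and "partial_isometry V (closure (Q ` rdom S)) (closure (Q' ` rdom S))"
    and "\<forall>\<phi>\<in>rdom S. Q' \<phi> = V (Q \<phi>)"
    and "m \<in> closure (Q ` rdom S)"
  shows "(h, V m) \<in> radj (companion S c Q') \<longleftrightarrow> (h, m) \<in> radj (companion S c Q)"
proof -
  have lin: "clinear V" and isometric: "\<forall>x\<in>closure (Q ` rdom S). norm (V x) = norm x"
    using assms(3) by (simp_all add: partial_isometry_def)
  have preserved: "cinner (V m) (Q' \<phi>) = cinner m (Q \<phi>)" if "\<phi> \<in> rdom S" for \<phi>
  proof -
    have "Q \<phi> \<in> closure (Q ` rdom S)"
      using closure_subset that by (rule subsetD[OF _ imageI])
    then have "cinner (V m) (V (Q \<phi>)) = cinner m (Q \<phi>)"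
      by (rule cinner_isometry_on[OF lin csubspace_closure[OF csubspace_range_representing_map[OF assms(1,2)]]
            isometric assms(5)])
    then show ?thesis
      using assms(4) that by simp
  qed
  show ?thesis
    unfolding radj_companion_iff
  proof (rule ball_cong[OF refl])
    fix p assume "p \<in> S"
    then show "(case p of (\<phi>, \<phi>') \<Rightarrow> cinner (V m) (Q' \<phi>) = cinner h (\<phi>' - c *\<^sub>R \<phi>)) \<longleftrightarrow>
        (case p of (\<phi>, \<phi>') \<Rightarrow> cinner m (Q \<phi>) = cinner h (\<phi>' - c *\<^sub>R \<phi>))"
      using preserved[OF rdomI] by (cases p) simp
  qed
qed

lemma mem_graph_on_rcomp: "(x, z) \<in> rcomp (graph_on D V) T \<longleftrightarrow> (\<exists>y. (x, y) \<in> T \<and> y \<in> D \<and> V y = z)"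
  by (auto simp: rcomp_def graph_on_def)

lemma rreg_radj_companion_partial_isometry_eq:
  assumes "lin_rel S" "representing_map S c Q" "representing_map S c Q'"
    and "partial_isometry V (closure (Q ` rdom S)) (closure (Q' ` rdom S))"
    and "\<forall>\<phi>\<in>rdom S. Q' \<phi> = V (Q \<phi>)"
  shows "rreg (radj (companion S c Q')) = rcomp (graph_on UNIV V) (rreg (radj (companion S c Q)))"
proof -
  let ?M = "closure (Q ` rdom S)"
  have V_closure: "closure (Q' ` rdom S) = V ` ?M"
    using assms(4) by (simp add: partial_isometry_def)
  note rreg_Q = mem_rreg_radj[OF csubspace_range_representing_map[OF assms(1,2)] rmul_radj_companion]
  note rreg_Q' = mem_rreg_radj[OF csubspace_range_representing_map[OF assms(1,3)] rmul_radj_companion]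
  have "(h, w) \<in> rreg (radj (companion S c Q')) \<longleftrightarrow>
      (h, w) \<in> rcomp (graph_on UNIV V) (rreg (radj (companion S c Q)))" for h w
  proof -
    have "(h, w) \<in> rreg (radj (companion S c Q')) \<longleftrightarrow>
        (h, w) \<in> radj (companion S c Q') \<and> w \<in> V ` ?M"
      by (simp only: rreg_Q' V_closure)
    also have "\<dots> \<longleftrightarrow> (\<exists>m\<in>?M. V m = w \<and> (h, V m) \<in> radj (companion S c Q'))"
      by blast
    also have "\<dots> \<longleftrightarrow> (\<exists>m\<in>?M. V m = w \<and> (h, m) \<in> radj (companion S c Q))"
      by (rule bex_cong[OF refl]) (simp add: radj_companion_partial_isometry_iff[OF assms(1,2,4,5)])
    also have "\<dots> \<longleftrightarrow> (h, w) \<in> rcomp (graph_on UNIV V) (rreg (radj (companion S c Q)))"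
      unfolding mem_graph_on_rcomp rreg_Q by blast
    finally show ?thesis .
  qed
  then show ?thesis
    by (simp add: set_eq_iff)
qed

theorem lemma3p2:
  fixes S :: "('h::complex_hilbert \<times> 'h) set"
    and \<gamma> c :: real
    and Q :: "'h \<Rightarrow> 'k::complex_hilbert"
    and Q' :: "'h \<Rightarrow> 'l::complex_hilbert"
    and V :: "'k \<Rightarrow> 'l"
  assumes "semibounded_lb S \<gamma>"
    and "c \<le> \<gamma>"
    and "representing_map S c Q"
    and "representing_map S c Q'"
    and "partial_isometry V (closure (Q ` rdom S)) (closure (Q' ` rdom S))"
    and "\<forall>\<phi>\<in>rdom S. Q' \<phi> = V (Q \<phi>)"
  shows "rcomp (companion S c Q') (graph_on (Q ` rdom S) V) = companion S c Q
    \<and> S \<subseteq> rplus_const c (rcomp (companion S c Q') (graph_on (rdom S) Q'))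
    \<and> rplus_const c (rcomp (companion S c Q') (graph_on (rdom S) Q'))
          = rplus_const c (rcomp (companion S c Q) (graph_on (rdom S) Q))
    \<and> (S = rplus_const c (rcomp (companion S c Q') (graph_on (rdom S) Q'))
          \<longleftrightarrow> rran (rminus_const S c) \<inter> rmul (radj S) = rmul S)
    \<and> rreg (radj (companion S c Q')) = rcomp (graph_on UNIV V) (rreg (radj (companion S c Q)))"
proof -
  have lr: "lin_rel S"
    using assms(1) by (simp add: semibounded_lb_def)
  show ?thesis
    unfolding companion_comp_eq[OF lr assms(3,4)]
    using companion_comp_partial_isometry_eq[OF lr assms(3,4,6)]
      subset_rplus_companion_comp[of S c Q] eq_rplus_companion_comp_iff[OF lr assms(3)]
      rreg_radj_companion_partial_isometry_eq[OF lr assms(3-6)]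
    by blast
qed

end
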